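(* Let $F$ be a continuous distribution function on $\mathbb{R}$, and let $G:=F\ast F$ be the distribution function of $S+T$ where $S,T$ are i.i.d. with distribution function $F$. For $(v,t)\in(0,1)^2$ define $k_v(t):=F\big(G^{-1}(v)-F^{-1}(t)\big)$, and set $C(v,u):=\int_0^uk_v(t)\,dt$ for $v\in(0,1)$, $u\in[0,1]$, with $C(0,u)=0$, $C(1,u)=u$. Then $C$ is an SI copula satisfying $\mathcal{T}(C)=C$.
   Context: For a distribution function $H$ on $\mathbb{R}$, $H^{-1}(w):=\inf\{x: H(x)\ge w\}$. A bivariate copula $C$ is SI if $C(v,\cdot)$ is concave for all $v\in[0,1]$. $\Pi(u,v)=uv$; $\partial_2$ the partial derivative in the second argument; $D\vee E(u,v):=\int_0^1\min\{\partial_2D(u,t),\partial_2E(v,t)\}\,dt$; $\mathcal{T}(C):=C\vee\Pi$. *)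

theory Defs
  imports "HOL-Probability.Probability"
begin

definition quantile :: "(real \<Rightarrow> real) \<Rightarrow> real \<Rightarrow> real" where
  "quantile H w = Inf {x. w \<le> H x}"

definition copula :: "(real \<Rightarrow> real \<Rightarrow> real) \<Rightarrow> bool" where
  "copula C \<longleftrightarrow>
     (\<forall>u\<in>{0..1}. C u 0 = 0 \<and> C 0 u = 0 \<and> C u 1 = u \<and> C 1 u = u) \<and>
     (\<forall>u1 u2 v1 v2. 0 \<le> u1 \<and> u1 \<le> u2 \<and> u2 \<le> 1 \<and> 0 \<le> v1 \<and> v1 \<le> v2 \<and> v2 \<le> 1 \<longrightarrow>
        C u2 v2 - C u2 v1 - C u1 v2 + C u1 v1 \<ge> 0)"

definition SI_copula :: "(real \<Rightarrow> real \<Rightarrow> real) \<Rightarrow> bool" where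
  "SI_copula C \<longleftrightarrow> copula C \<and> (\<forall>v\<in>{0..1}. concave_on {0..1} (C v))"

definition indep_copula :: "real \<Rightarrow> real \<Rightarrow> real" where
  "indep_copula u v = u * v"

text \<open>Partial derivative in the second argument (where it exists; elsewhere an
  unspecified value, which is irrelevant for integration since the set of such points is null).\<close>
definition partial2 :: "(real \<Rightarrow> real \<Rightarrow> real) \<Rightarrow> real \<Rightarrow> real \<Rightarrow> real" where
  "partial2 D u t = deriv (\<lambda>s. D u s) t"

definition copula_join :: "(real \<Rightarrow> real \<Rightarrow> real) \<Rightarrow> (real \<Rightarrow> real \<Rightarrow> real) \<Rightarrow> real \<Rightarrow> real \<Rightarrow> real" where
  "copula_join D E u v = integral {0..1} (\<lambda>t. min (partial2 D u t) (partial2 E v t))"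

definition T_op :: "(real \<Rightarrow> real \<Rightarrow> real) \<Rightarrow> real \<Rightarrow> real \<Rightarrow> real" where
  "T_op C = copula_join C indep_copula"

end

theory Submission
  imports Defs
begin

(* Write Q for the quantile function of F, S and T for independent copies with distribution F,
   and g = G^-1(u). Since Q(U) has distribution F for U uniform on (0,1), the integral of k_u over
   [0,1] is E F(g - S) = G(g) = u; together with k_u(t) being decreasing in t and increasing in u
   this makes C an SI copula. As k_u is monotone, the derivative of C(u,.) equals k_u off a
   countable set, so T(C)(u,v) = E min(F(g - S), v). For continuous F,
   min(F(x), v) = P(T <= x, F(T) <= v), and evaluating P(S + T <= g, F(T) <= v) by Fubini in the
   other order gives E[1{F(T) <= v} F(g - T)], which is the integral of k_u over [0,v], i.e.
   C(u,v). *)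

lemma quantile_le_iff:
  assumes "real_distribution M" "0 < t" "t < 1"
  shows "quantile (cdf M) t \<le> x \<longleftrightarrow> t \<le> cdf M x"
proof -
  interpret cdf_distribution M using assms(1) by (simp add: cdf_distribution_def)
  show ?thesis using pseudoinverse[of t x] assms unfolding quantile_def by simp
qed

lemma quantile_mono:
  assumes "real_distribution M" "0 < s" "s \<le> t" "t < 1"
  shows "quantile (cdf M) s \<le> quantile (cdf M) t"
  using quantile_le_iff[OF assms(1), of s] quantile_le_iff[OF assms(1), of t] assms by force

lemma cdf_quantile:
  assumes "real_distribution M" "continuous_on UNIV (cdf M)" "0 < t" "t < 1"
  shows "cdf M (quantile (cdf M) t) = t"
proof (rule antisym)
  let ?q = "quantile (cdf M) t"
  show "t \<le> cdf M ?q" using quantile_le_iff[OF assms(1,3,4), of ?q] by simp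
  have "(cdf M \<longlongrightarrow> cdf M ?q) (at_left ?q)"
    using assms(2) by (simp add: continuous_on_eq_continuous_at isCont_def filterlim_at_split)
  moreover have "eventually (\<lambda>x. cdf M x \<le> t) (at_left ?q)"
  proof (rule eventually_at_leftI[of "?q - 1"])
    fix x assume "x \<in> {?q - 1<..<?q}"
    then show "cdf M x \<le> t" using quantile_le_iff[OF assms(1,3,4), of x] by simp
  qed simp
  ultimately show "cdf M ?q \<le> t" by (rule tendsto_upperbound) simp
qed

lemma borel_measurable_cdf:
  assumes "real_distribution M"
  shows "cdf M \<in> borel_measurable borel"
proof -
  interpret real_distribution M by fact
  show ?thesis by (intro borel_measurable_mono monoI cdf_nondecreasing)
qed

lemma has_integral_comp_quantile:
  fixes h :: "real \<Rightarrow> real"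
  assumes "real_distribution M" and [measurable]: "h \<in> borel_measurable borel"
    and bounded: "\<And>x. \<bar>h x\<bar> \<le> B"
  shows "((\<lambda>t. h (quantile (cdf M) t)) has_integral (\<integral>x. h x \<partial>M)) {0..1}"
proof -
  interpret cdf_distribution M using assms(1) by (simp add: cdf_distribution_def)
  let ?U = "restrict_space lborel {0<..<1::real}"
  interpret U: prob_space ?U
    by (auto simp: emeasure_restrict_space space_restrict_space intro!: prob_spaceI)
  have "sets ?U = sets (restrict_space borel {0<..<1})"
    by (rule sets_restrict_space_cong) simp
  then have I_meas: "I \<in> measurable ?U borel"
    using measurable_CI measurable_cong_sets by blast
  then have hI_meas: "(\<lambda>t. h (I t)) \<in> borel_measurable ?U" by measurable
  have "(\<integral>x. h x \<partial>M) = (\<integral>t. h (I t) \<partial>?U)"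
    using integral_distr[OF I_meas, of h] distr_I_eq_M by simp
  also have "\<dots> = (LINT t:{0<..<1}|lborel. h (I t))"
    by (simp add: integral_restrict_space set_lebesgue_integral_def)
  finally have eq: "(\<integral>x. h x \<partial>M) = (LINT t:{0<..<1}|lborel. h (I t))" .
  have "integrable ?U (\<lambda>t. h (I t))"
    by (rule U.integrable_const_bound[where B=B]) (use bounded hI_meas in auto)
  then have "set_integrable lborel {0<..<1} (\<lambda>t. h (I t))"
    by (simp add: set_integrable_def integrable_restrict_space)
  then have "((\<lambda>t. h (I t)) has_integral (\<integral>x. h x \<partial>M)) {0<..<1}"
    unfolding eq by (metis set_borel_integral_eq_integral has_integral_integral)
  then show ?thesis by (simp add: quantile_def has_integral_Icc_iff_Ioo)
qed

lemma measure_le_and_cdf_le_eq_min: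
  assumes "real_distribution M" "continuous_on UNIV (cdf M)" "0 \<le> v" "v \<le> 1"
  shows "measure M {z. z \<le> c \<and> cdf M z \<le> v} = min (cdf M c) v"
proof -
  interpret real_distribution M by fact
  let ?A = "{z. z \<le> c \<and> cdf M z \<le> v}" and ?m = "min (cdf M c) v"
  note [measurable] = borel_measurable_cdf[OF assms(1)]
  have transfer: "((\<lambda>t. indicator ?A (quantile (cdf M) t)) has_integral measure M ?A) {0..1}"
    using has_integral_comp_quantile[OF assms(1), of "indicator ?A" 1] by simp
  have pointwise: "indicator {0..?m} t = indicator ?A (quantile (cdf M) t)"
    if "t \<in> {0..1} - {0, 1}" for t :: real
  proof -
    have "0 < t" "t < 1" using that by auto
    then show ?thesis
      using quantile_le_iff[OF assms(1), of t c] cdf_quantile[OF assms(1,2), of t]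
      by (simp add: indicator_def)
  qed
  have "(indicator {0..?m} has_integral measure M ?A) {0..1}"
    by (rule has_integral_spike[of "{0, 1}", OF _ pointwise transfer]) simp_all
  moreover have "(indicator {0..?m} has_integral ?m) {0..1}"
  proof -
    have m: "0 \<le> ?m" "?m \<le> 1"
      using assms(3,4) cdf_nonneg[of c] cdf_bounded_prob[of c] by auto
    then have "((\<lambda>_. 1::real) has_integral ?m) {0..?m}"
      using has_integral_const_real[of "1::real" 0 ?m] by simp
    then show ?thesis
      using has_integral_restrict[of "{0..?m}" "{0..1}" "\<lambda>_. 1::real"] m
      by (simp add: indicator_def[abs_def] of_bool_def)
  qed
  ultimately show ?thesis by (rule has_integral_unique)
qed

lemma real_distribution_convolution:
  assumes "real_distribution M" "real_distribution N"
  shows "real_distribution (M \<star> N)"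
proof -
  interpret M: real_distribution M by fact
  interpret N: real_distribution N by fact
  interpret pair_prob_space M N ..
  have "(\<lambda>(x, y). x + y::real) \<in> measurable (M \<Otimes>\<^sub>M N) borel"
    by measurable
  then have "prob_space (distr (M \<Otimes>\<^sub>M N) borel (\<lambda>(x, y). x + y))"
    by (rule prob_space_distr)
  then show ?thesis
    by (simp add: real_distribution_def real_distribution_axioms_def convolution_def)
qed

lemma emeasure_convolution:
  assumes "real_distribution M" "real_distribution N" "A \<in> sets borel"
  shows "emeasure (M \<star> N) A = (\<integral>\<^sup>+y. emeasure N {a. a + y \<in> A} \<partial>M)"
proof -
  interpret M: real_distribution M by fact
  interpret N: real_distribution N by fact
  show ?thesis
    by (rule convolution_emeasure) (auto simp: assms)
qed

lemma cdf_convolution: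
  assumes "real_distribution M" "real_distribution N"
  shows "cdf (M \<star> N) x = (\<integral>y. cdf N (x - y) \<partial>M)"
proof -
  interpret M: real_distribution M by fact
  interpret N: real_distribution N by fact
  interpret MN: real_distribution "M \<star> N" using real_distribution_convolution[OF assms] .
  note [measurable] = borel_measurable_cdf[OF assms(2)]
  have "emeasure (M \<star> N) {..x} = (\<integral>\<^sup>+y. ennreal (cdf N (x - y)) \<partial>M)"
  proof -
    have "{a. a + y \<in> {..x}} = {..x - y}" for y by auto
    then show ?thesis
      by (simp add: emeasure_convolution[OF assms] cdf_def N.emeasure_eq_measure)
  qed
  also have "\<dots> = ennreal (\<integral>y. cdf N (x - y) \<partial>M)"
    by (intro nn_integral_eq_integral M.integrable_const_bound[where B=1])
      (auto simp: N.cdf_nonneg N.cdf_bounded_prob)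
  finally show ?thesis
    by (simp add: cdf_def MN.emeasure_eq_measure integral_nonneg_AE N.cdf_nonneg)
qed

lemma continuous_cdf_convolution:
  assumes "real_distribution M" "real_distribution N" "continuous_on UNIV (cdf N)"
  shows "continuous_on UNIV (cdf (M \<star> N))"
proof -
  interpret N: real_distribution N by fact
  interpret MN: real_distribution "M \<star> N" using real_distribution_convolution[OF assms(1,2)] .
  have N_atomless: "emeasure N {z} = 0" for z
    using assms(3) N.isCont_cdf by (simp add: continuous_on_eq_continuous_at N.emeasure_eq_measure)
  have "measure (M \<star> N) {x} = 0" for x
  proof -
    have "{a. a + y \<in> {x}} = {x - y}" for y by auto
    then have "emeasure (M \<star> N) {x} = 0"
      by (simp add: emeasure_convolution[OF assms(1,2)] N_atomless)
    then show ?thesis by (simp add: MN.emeasure_eq_measure)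
  qed
  then show ?thesis by (simp add: continuous_on_eq_continuous_at MN.isCont_cdf)
qed

lemma integral_min_cdf_eq_integral_cdf_le:
  assumes "real_distribution M" "continuous_on UNIV (cdf M)" "0 \<le> v" "v \<le> 1"
  shows "(\<integral>y. min (cdf M (g - y)) v \<partial>M) = (\<integral>z. indicator {z. cdf M z \<le> v} z * cdf M (g - z) \<partial>M)"
proof -
  interpret real_distribution M by fact
  interpret pair_prob_space M M ..
  note [measurable] = borel_measurable_cdf[OF assms(1)]
  define S where "S = {(y, z). y + z \<le> g \<and> cdf M z \<le> v}"
  have "S = {p \<in> space (M \<Otimes>\<^sub>M M). fst p + snd p \<le> g \<and> cdf M (snd p) \<le> v}"
    by (auto simp: S_def space_pair_measure)
  also have "\<dots> \<in> sets (M \<Otimes>\<^sub>M M)"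
    by measurable
  finally have [measurable]: "S \<in> sets (M \<Otimes>\<^sub>M M)" .
  have "integrable (M \<Otimes>\<^sub>M M) (\<lambda>(y, z). indicat_real S (y, z))"
    by (rule P.integrable_const_bound[where B=1]) auto
  then have "(\<integral>z. \<integral>y. indicat_real S (y, z) \<partial>M \<partial>M) = (\<integral>y. \<integral>z. indicat_real S (y, z) \<partial>M \<partial>M)"
    by (rule Fubini_integral)
  moreover have "(\<integral>z. indicator S (y, z) \<partial>M) = min (cdf M (g - y)) v" for y
  proof -
    have "(\<lambda>z. indicator S (y, z)) = (indicator {z. z \<le> g - y \<and> cdf M z \<le> v} :: _ \<Rightarrow> real)"
      by (auto simp: S_def indicator_def fun_eq_iff)
    then show ?thesis
      using measure_le_and_cdf_le_eq_min[OF assms, of "g - y"] by simp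
  qed
  moreover have "(\<integral>y. indicator S (y, z) \<partial>M) = indicator {z. cdf M z \<le> v} z * cdf M (g - z)" for z
  proof -
    have "(\<lambda>y. indicator S (y, z)) = (\<lambda>y. indicator {z. cdf M z \<le> v} z * indicator {..g - z} y :: real)"
      by (auto simp: S_def indicator_def fun_eq_iff)
    then show ?thesis by (simp add: cdf_def)
  qed
  ultimately show ?thesis by simp
qed

lemma has_integral_cdf_minus_quantile:
  assumes "real_distribution M" "real_distribution N"
  shows "((\<lambda>t. cdf N (x - quantile (cdf M) t)) has_integral cdf (M \<star> N) x) {0..1}"
proof -
  interpret N: real_distribution N by fact
  note [measurable] = borel_measurable_cdf[OF assms(2)]
  show ?thesis
    unfolding cdf_convolution[OF assms]
    by (rule has_integral_comp_quantile[OF assms(1), where B=1])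
      (auto simp: N.cdf_nonneg N.cdf_bounded_prob)
qed

lemma integral_min_cdf_minus_quantile:
  assumes "real_distribution M" "continuous_on UNIV (cdf M)" "0 \<le> v" "v \<le> 1"
  shows "integral {0..1} (\<lambda>t. min (cdf M (g - quantile (cdf M) t)) v)
       = integral {0..v} (\<lambda>t. cdf M (g - quantile (cdf M) t))"
proof -
  interpret real_distribution M by fact
  note [measurable] = borel_measurable_cdf[OF assms(1)]
  let ?Q = "quantile (cdf M)" and ?h = "\<lambda>z. indicator {z. cdf M z \<le> v} z * cdf M (g - z)"
  have "integral {0..1} (\<lambda>t. min (cdf M (g - ?Q t)) v) = (\<integral>y. min (cdf M (g - y)) v \<partial>M)"
    by (intro integral_unique has_integral_comp_quantile[OF assms(1), where B=1])
      (auto simp: cdf_nonneg cdf_bounded_prob assms(3,4) min_le_iff_disj)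
  also have "\<dots> = (\<integral>z. ?h z \<partial>M)"
    by (rule integral_min_cdf_eq_integral_cdf_le[OF assms])
  also have "\<dots> = integral {0..1} (\<lambda>t. ?h (?Q t))"
    by (intro integral_unique[symmetric] has_integral_comp_quantile[OF assms(1), where B=1])
      (auto simp: cdf_nonneg cdf_bounded_prob indicator_def)
  also have "\<dots> = integral {0..1} (\<lambda>t. if t \<in> {0..v} then cdf M (g - ?Q t) else 0)"
  proof (rule integral_spike[of "{0, 1}"])
    fix t :: real assume "t \<in> {0..1} - {0, 1}"
    then show "(if t \<in> {0..v} then cdf M (g - ?Q t) else 0) = ?h (?Q t)"
      using cdf_quantile[OF assms(1,2), of t] by (auto simp: indicator_def)
  qed simp
  also have "\<dots> = integral {0..v} (\<lambda>t. cdf M (g - ?Q t))"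
    unfolding integral_restrict_Int using assms(4) by (simp add: Int_absorb2)
  finally show ?thesis .
qed

lemma concave_on_integral_antimono:
  fixes f :: "real \<Rightarrow> real"
  assumes f_int: "f integrable_on {a..b}"
    and antimono: "\<And>x y. a < x \<Longrightarrow> x \<le> y \<Longrightarrow> y < b \<Longrightarrow> f y \<le> f x"
  shows "concave_on {a..b} (\<lambda>u. integral {a..u} f)"
proof (rule concave_on_linorderI)
  fix t x y :: real
  assume t: "0 < t" "t < 1" and x: "x \<in> {a..b}" and y: "y \<in> {a..b}" and "x < y"
  define z where "z = (1 - t) *\<^sub>R x + t *\<^sub>R y"
  have "0 < t * (y - x)" "0 < (1 - t) * (y - x)"
    using t \<open>x < y\<close> by simp_all
  then have xz: "x < z" and zy: "z < y"
    by (simp_all add: z_def algebra_simps)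
  have z: "a < z" "z < b" using xz zy x y by auto
  \<comment> \<open>f is antitone only on the open interval, so it is modified at the endpoints\<close>
  define g where "g s = (if s \<in> {a, b} then f z else f s)" for s
  have integral_g: "integral {c..d} f = integral {c..d} g" for c d
    by (rule integral_spike[of "{a, b}"]) (auto simp: g_def)
  have "g integrable_on {a..b}"
    by (rule integrable_spike_finite[of "{a, b}" _ _ f]) (auto simp: g_def f_int)
  then have g_int: "g integrable_on {c..d}" if "a \<le> c" "d \<le> b" for c d
    by (rule integrable_on_subinterval) (use that in auto)
  have "f z \<le> g s" if "s \<in> {x..z}" for s
    using that x z by (auto simp: g_def intro!: antimono)
  then have lower: "(z - x) * f z \<le> integral {x..z} g"
    using integral_le[of "\<lambda>_. f z" "{x..z}" g] g_int[of x z] x xz z by auto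
  have "g s \<le> f z" if "s \<in> {z..y}" for s
    using that y z by (auto simp: g_def intro!: antimono)
  then have upper: "integral {z..y} g \<le> (y - z) * f z"
    using integral_le[of g "{z..y}" "\<lambda>_. f z"] g_int[of z y] y zy z by auto
  have "t * integral {z..y} g \<le> t * ((y - z) * f z)"
    using upper t by simp
  also have "\<dots> = (1 - t) * ((z - x) * f z)"
    by (simp add: z_def algebra_simps)
  also have "\<dots> \<le> (1 - t) * integral {x..z} g"
    using lower t by simp
  finally have "t * integral {z..y} g \<le> (1 - t) * integral {x..z} g" .
  moreover have "integral {a..z} g = integral {a..x} g + integral {x..z} g"
    "integral {a..y} g = integral {a..z} g + integral {z..y} g"
    using g_int x y xz zy z
    by (auto intro!: Henstock_Kurzweil_Integration.integral_combine[symmetric])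
  ultimately show "(1 - t) * integral {a..x} f + t * integral {a..y} f \<le> integral {a..(1 - t) *\<^sub>R x + t *\<^sub>R y} f"
    unfolding z_def[symmetric] integral_g by (simp add: algebra_simps)
qed simp

lemma deriv_integral_antimono_ae:
  fixes f :: "real \<Rightarrow> real"
  assumes f_int: "f integrable_on {a..b}"
    and antimono: "\<And>s t. a < s \<Longrightarrow> s \<le> t \<Longrightarrow> t < b \<Longrightarrow> f t \<le> f s"
  obtains N where "negligible N" "\<And>t. t \<in> {a..b} - N \<Longrightarrow> deriv (\<lambda>u. integral {a..u} f) t = f t"
proof
  define D where "D = {t \<in> {a<..<b}. \<not> isCont (\<lambda>t. - f t) t}"
  have "mono_on {a<..<b} (\<lambda>t. - f t)"
    by (auto simp: mono_on_def intro: antimono)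
  then have "countable D"
    unfolding D_def by (rule mono_on_ctble_discont_open[rotated]) simp
  then show "negligible ({a, b} \<union> D)"
    by (simp add: negligible_iff_null_sets null_sets_completionI countable_imp_null_set_lborel)
  fix t assume t: "t \<in> {a..b} - ({a, b} \<union> D)"
  then have "isCont f t"
    using continuous_minus[of "at t" "\<lambda>t. - f t"] by (auto simp: D_def)
  then have "((\<lambda>u. integral {a..u} f) has_vector_derivative f t) (at t within {a..b})"
    using integral_has_vector_derivative_continuous_at[OF f_int, of t "{}"] t
    by (simp add: continuous_at_imp_continuous_within)
  moreover have "at t within {a..b} = at t"
    using t by (intro at_within_interior) auto
  ultimately show "deriv (\<lambda>u. integral {a..u} f) t = f t"
    by (intro DERIV_imp_deriv) (simp add: has_real_derivative_iff_has_vector_derivative)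
qed

definition kernel_copula :: "(real \<Rightarrow> real \<Rightarrow> real) \<Rightarrow> real \<Rightarrow> real \<Rightarrow> real" where
  "kernel_copula k v u = (if v \<le> 0 then 0 else if 1 \<le> v then u else integral {0..u} (k v))"

lemma SI_copula_kernel_copula:
  assumes bounded: "\<And>v t. 0 < v \<Longrightarrow> v < 1 \<Longrightarrow> t \<in> {0..1} \<Longrightarrow> 0 \<le> k v t \<and> k v t \<le> 1"
    and antimono: "\<And>v s t. 0 < v \<Longrightarrow> v < 1 \<Longrightarrow> 0 < s \<Longrightarrow> s \<le> t \<Longrightarrow> t < 1 \<Longrightarrow> k v t \<le> k v s"
    and mono: "\<And>v w t. 0 < v \<Longrightarrow> v \<le> w \<Longrightarrow> w < 1 \<Longrightarrow> t \<in> {0..1} \<Longrightarrow> k v t \<le> k w t"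
    and total: "\<And>v. 0 < v \<Longrightarrow> v < 1 \<Longrightarrow> (k v has_integral v) {0..1}"
  shows "SI_copula (kernel_copula k)"
proof -
  let ?C = "kernel_copula k"
  have k_int: "k v integrable_on {u1..u2}" if "0 < v" "v < 1" "0 \<le> u1" "u2 \<le> 1" for v u1 u2
    using integrable_on_subinterval[of "k v" "{0..1}"] total[OF that(1,2)] that(3,4) by auto
  have increment: "?C v u2 - ?C v u1 = integral {u1..u2} (k v)"
    if "0 < v" "v < 1" "0 \<le> u1" "u1 \<le> u2" "u2 \<le> 1" for v u1 u2
    using Henstock_Kurzweil_Integration.integral_combine[of 0 u1 u2 "k v"] k_int[of v 0 u2] that
    by (simp add: kernel_copula_def)
  have increment_bounds: "0 \<le> ?C v u2 - ?C v u1 \<and> ?C v u2 - ?C v u1 \<le> u2 - u1"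
    if "0 \<le> v" "v \<le> 1" "0 \<le> u1" "u1 \<le> u2" "u2 \<le> 1" for v u1 u2
  proof (cases "v = 0 \<or> v = 1")
    case False
    then have "0 < v" "v < 1" using that by auto
    then show ?thesis
      using integral_nonneg[of "k v" "{u1..u2}"] integral_le[of "k v" "{u1..u2}" "\<lambda>_. 1"]
        increment[of v u1 u2] k_int[of v u1 u2] bounded that by auto
  qed (use that in \<open>auto simp: kernel_copula_def\<close>)
  have increment_mono: "?C v u2 - ?C v u1 \<le> ?C w u2 - ?C w u1"
    if "0 \<le> v" "v \<le> w" "w \<le> 1" "0 \<le> u1" "u1 \<le> u2" "u2 \<le> 1" for v w u1 u2
  proof (cases "v = 0 \<or> w = 1")
    case True
    then show ?thesis
      using increment_bounds[of v u1 u2] increment_bounds[of w u1 u2] that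
      by (auto simp: kernel_copula_def)
  next
    case False
    then have "0 < v" "w < 1" using that by auto
    then show ?thesis
      using increment[of v u1 u2] increment[of w u1 u2] that
        integral_le[of "k v" "{u1..u2}" "k w"] k_int[of v u1 u2] k_int[of w u1 u2] mono[of v w]
      by auto
  qed
  have margins: "?C u 0 = 0 \<and> ?C 0 u = 0 \<and> ?C u 1 = u \<and> ?C 1 u = u" if "u \<in> {0..1}" for u
    using that total[of u] by (auto simp: kernel_copula_def integral_unique)
  have "copula ?C"
    unfolding copula_def
  proof (intro conjI ballI allI impI)
    fix u1 u2 v1 v2 :: real
    assume "0 \<le> u1 \<and> u1 \<le> u2 \<and> u2 \<le> 1 \<and> 0 \<le> v1 \<and> v1 \<le> v2 \<and> v2 \<le> 1"
    then show "?C u2 v2 - ?C u2 v1 - ?C u1 v2 + ?C u1 v1 \<ge> 0"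
      using increment_mono[of u1 u2 v1 v2] by linarith
  qed (use margins in blast)+
  moreover have "concave_on {0..1} (?C v)" if "v \<in> {0..1}" for v
  proof (cases "v = 0 \<or> v = 1")
    case True
    then show ?thesis
      by (auto simp: kernel_copula_def[abs_def] concave_on_const concave_on_ident)
  next
    case False
    then have "0 < v" "v < 1" using that by auto
    then have "?C v = (\<lambda>u. integral {0..u} (k v))"
      by (simp add: kernel_copula_def fun_eq_iff)
    then show ?thesis
      using concave_on_integral_antimono[OF k_int[of v 0 1]] antimono \<open>0 < v\<close> \<open>v < 1\<close>
      by simp
  qed
  ultimately show ?thesis
    by (simp add: SI_copula_def)
qed

lemma T_op_eq_integral_min_deriv:
  "T_op C u v = integral {0..1} (\<lambda>t. min (deriv (C u) t) v)"
proof -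
  have "deriv (indep_copula v) t = v" for t
    unfolding indep_copula_def by (rule DERIV_imp_deriv) (auto intro!: derivative_eq_intros)
  then show ?thesis
    by (simp add: T_op_def copula_join_def partial2_def)
qed

lemma T_op_kernel_copula:
  assumes antimono: "\<And>v s t. 0 < v \<Longrightarrow> v < 1 \<Longrightarrow> 0 < s \<Longrightarrow> s \<le> t \<Longrightarrow> t < 1 \<Longrightarrow> k v t \<le> k v s"
    and integrable: "\<And>v. 0 < v \<Longrightarrow> v < 1 \<Longrightarrow> k v integrable_on {0..1}"
    and min_identity: "\<And>u v. 0 < u \<Longrightarrow> u < 1 \<Longrightarrow> 0 \<le> v \<Longrightarrow> v \<le> 1 \<Longrightarrow>
           integral {0..1} (\<lambda>t. min (k u t) v) = integral {0..v} (k u)"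
    and u: "u \<in> {0..1}" and v: "v \<in> {0..1}"
  shows "T_op (kernel_copula k) u v = kernel_copula k u v"
proof (cases "u = 0 \<or> u = 1")
  case True
  then have "kernel_copula k u = (if u = 0 then (\<lambda>_. 0) else (\<lambda>s. s))"
    by (auto simp: kernel_copula_def fun_eq_iff)
  then show ?thesis
    using True v by (auto simp: T_op_eq_integral_min_deriv kernel_copula_def)
next
  case False
  then have "0 < u" "u < 1" using u by auto
  then have C_u: "kernel_copula k u = (\<lambda>s. integral {0..s} (k u))"
    by (simp add: kernel_copula_def fun_eq_iff)
  obtain N where "negligible N" and deriv_eq: "\<And>t. t \<in> {0..1} - N \<Longrightarrow> deriv (kernel_copula k u) t = k u t"
    using deriv_integral_antimono_ae[OF integrable[OF \<open>0 < u\<close> \<open>u < 1\<close>]] antimono \<open>0 < u\<close> \<open>u < 1\<close>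
    unfolding C_u by metis
  have "T_op (kernel_copula k) u v = integral {0..1} (\<lambda>t. min (k u t) v)"
    unfolding T_op_eq_integral_min_deriv
    by (rule integral_spike[OF \<open>negligible N\<close>]) (simp add: deriv_eq)
  also have "\<dots> = kernel_copula k u v"
    using min_identity[of u v] \<open>0 < u\<close> \<open>u < 1\<close> v by (simp add: C_u)
  finally show ?thesis .
qed

theorem mainTheorem14:
  fixes M :: "real measure" and F G :: "real \<Rightarrow> real"
    and k :: "real \<Rightarrow> real \<Rightarrow> real" and C :: "real \<Rightarrow> real \<Rightarrow> real"
  assumes "real_distribution M"
    and F_def: "F = cdf M"
    and F_cont: "continuous_on UNIV F"
    and G_def: "G = cdf (M \<star> M)"
    and k_def: "\<And>v t. k v t = F (quantile G v - quantile F t)"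
    and C_def: "\<And>v u. C v u = (if v \<le> 0 then 0 else if 1 \<le> v then u
                                   else integral {0..u} (k v))"
  shows "SI_copula C \<and> (\<forall>u\<in>{0..1}. \<forall>v\<in>{0..1}. T_op C u v = C u v)"
proof -
  interpret real_distribution M by fact
  note distM = \<open>real_distribution M\<close> and contM = F_cont[unfolded F_def]
  note distMM = real_distribution_convolution[OF distM distM]
  have C_eq: "C = kernel_copula k"
    by (simp add: C_def kernel_copula_def fun_eq_iff)
  have k_eq: "k v = (\<lambda>t. cdf M (quantile G v - quantile (cdf M) t))" for v
    by (simp add: k_def F_def fun_eq_iff)
  have bounded: "0 \<le> k v t \<and> k v t \<le> 1" for v t
    by (simp add: k_eq cdf_nonneg cdf_bounded_prob)
  have antimono: "k v t \<le> k v s" if "0 < s" "s \<le> t" "t < 1" for v s t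
    unfolding k_eq by (intro cdf_nondecreasing diff_left_mono quantile_mono[OF distM that])
  have mono: "k v t \<le> k w t" if "0 < v" "v \<le> w" "w < 1" for v w t
    unfolding k_eq G_def by (intro cdf_nondecreasing diff_right_mono quantile_mono[OF distMM that])
  have total: "(k v has_integral v) {0..1}" if "0 < v" "v < 1" for v
    using has_integral_cdf_minus_quantile[OF distM distM, of "quantile G v"]
      cdf_quantile[OF distMM continuous_cdf_convolution[OF distM distM contM] that]
    by (simp add: k_eq G_def)
  have min_identity: "integral {0..1} (\<lambda>t. min (k u t) v) = integral {0..v} (k u)"
    if "0 \<le> v" "v \<le> 1" for u v
    unfolding k_eq by (rule integral_min_cdf_minus_quantile[OF distM contM that])
  show ?thesis
    unfolding C_eq using bounded antimono mono total total[THEN has_integral_integrable] min_identity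
    by (auto intro!: SI_copula_kernel_copula T_op_kernel_copula)
qed

end
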